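(* Let $q>1$, let $X$ be a real zero mean stationary random process with power spectrum $\mathscr{S}_X$, let $a$ be a positive real function and $\gamma$ a strictly increasing differentiable function. Let $\psi\in H^2(\mathbb{R})$ be such that $\hat\psi$ is bounded and $|\hat\psi(u)|=\mathcal{O}(u^{-\eta})$ as $u\to\infty$ for some $\eta>2$, and let $\varphi_1,\varphi_2$ be the bounded functions on $\mathbb{R}^+$ given by $\varphi_1(u)=u|\hat\psi(u)|^2$ and $\varphi_2(u)=u^2|\hat\psi(u)|$. Assume $$J_X=\int_0^\infty \xi^{-1}\mathscr{S}_X(\xi)\,d\xi<\infty .$$ Let $\widetilde{\mathcal{W}}_Y$ be a zero mean random field on $\mathbb{R}\times\mathbb{R}$ with covariance $$\mathbb{E}\{\widetilde{\mathcal{W}}_Y(s,\tau)\overline{\widetilde{\mathcal{W}}_Y(s',\tau')}\}=a(\tau)a(\tau')q^{\frac{s+s'}{2}}\sqrt{\gamma'(\tau)\gamma'(\tau')}\int_0^\infty\mathscr{S}_X(\xi)\overline{\hat\psi}(q^s\gamma'(\tau)\xi)\hat\psi(q^{s'}\gamma'(\tau')\xi)e^{2i\pi\xi(\gamma(\tau)-\gamma(\tau'))}d\xi .$$ Let $\tau_1,\dots,\tau_{N_\tau}$ be time samples and $s_1,\dots,s_{M_s}$ scale samples, and set $\theta_{n,1}=a(\tau_n)^2$, $\theta_{n,2}=\log_q(\gamma'(\tau_n))$, $\boldsymbol\theta_j=(\theta_{n,j})_{n}$. For each $k$, let $\tilde\theta^{(k)}_{n,1}$, $\tilde\theta^{(k)}_{n,2}$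 ($1\le n\le N_\tau$) be estimates of these parameters (treated as deterministic), and assume there is $c_{\theta_1}>0$ with $\tilde\theta^{(k)}_{n,1}>c_{\theta_1}$ for all $n,k$. Define the spectrum estimate $$\tilde{\mathscr{S}}^{(k)}_X(q^{-s_m}\omega_0)=\frac{1}{N_\tau\|\psi\|_2^2}\sum_{n=1}^{N_\tau}\frac{1}{\tilde\theta^{(k)}_{n,1}}\Big|\widetilde{\mathcal{W}}_Y\big(s_m-\tilde\theta^{(k)}_{n,2},\tau_n\big)\Big|^2,$$ and the bias $b^{(k)}_{\mathscr{S}_X}(m)=\mathbb{E}\{\tilde{\mathscr{S}}^{(k)}_X(q^{-s_m}\omega_0)\}-\mathscr{S}_{X,\psi}(q^{-s_m}\omega_0)$ for $m=1,\dots,M_s$, where $$\mathscr{S}_{X,\psi}(q^{-s_m}\omega_0)=\frac{1}{\|\psi\|_2^2}\int_0^\infty\mathscr{S}_X(\xi)\,q^{s_m}|\hat\psi(q^{s_m}\xi)|^2\,d\xi .$$ Then $$\|b^{(k)}_{\mathscr{S}_X}\|_\infty\le\frac{J_X}{\|\psi\|_2^2}\Big(K'_1\|\boldsymbol\theta_1-\tilde{\boldsymbol\theta}^{(k)}_1\|_\infty+K'_2\|\tilde{\boldsymbol\theta}^{(k)}_2-\boldsymbol\theta_2\|_\infty\Big),$$ where $K'_1=\|\varphi_1\|_\infty/c_{\theta_1}<\infty$ and $K'_2=\ln(q)\big(\|\varphi_1\|_\infty+2\|\hat\psi'\|_\infty\|\varphi_2\|_\infty\big)<\infty$.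
   Context: $H^2(\mathbb{R})=\{\psi\in L^2(\mathbb{R}):\operatorname{supp}\hat\psi\subset\mathbb{R}^+\}$, $\hat\psi$ the Fourier transform of $\psi$. The power spectrum $\mathscr{S}_X\ge0$ satisfies $\mathbb{E}\{X_tX_s\}=\int\mathscr{S}_X(\nu)e^{2i\pi\nu(t-s)}d\nu$. $\omega_0$ is the central frequency of $|\hat\psi|^2$. The field $\widetilde{\mathcal{W}}_Y$ models the approximate wavelet transform $a(\tau)\mathcal{W}_X(s+\log_q\gamma'(\tau),\gamma(\tau))$ of $Y_t=a(t)\sqrt{\gamma'(t)}X_{\gamma(t)}$, with $\mathcal{W}_X(s,\tau)=\int X_t\overline{q^{-s/2}\psi(q^{-s}(t-\tau))}dt$. Sup norms $\|\cdot\|_\infty$ of vectors are over $n=1,\dots,N_\tau$ (resp. $m=1,\dots,M_s$ for the bias), and of functions are suprema over their domain.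
   Formalization: The Fourier transform $\hat\psi$ is also assumed differentiable on (0, infinity) with bounded derivative $\hat\psi'$. The paper assumes this as well. *)

theory Defs
  imports "HOL-Probability.Probability" "HOL-Library.Landau_Symbols"
begin

text \<open>The wavelet is represented through its Fourier transform Psi (psi hat).
  Squared L2 norm of psi, via Plancherel: integral of the squared modulus of Psi.\<close>
definition psi_sq_norm :: "(real \<Rightarrow> complex) \<Rightarrow> real" where
  "psi_sq_norm Psi = (\<integral>u. (cmod (Psi u))\<^sup>2 \<partial>lborel)"

definition phi1 :: "(real \<Rightarrow> complex) \<Rightarrow> real \<Rightarrow> real" where
  "phi1 Psi u = u * (cmod (Psi u))\<^sup>2"

definition phi2 :: "(real \<Rightarrow> complex) \<Rightarrow> real \<Rightarrow> real" where
  "phi2 Psi u = u\<^sup>2 * cmod (Psi u)"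

definition sup_pos :: "(real \<Rightarrow> real) \<Rightarrow> real" where
  "sup_pos f = (SUP u\<in>{0<..}. \<bar>f u\<bar>)"

text \<open>The wavelet-smoothed spectrum S_{X,psi}(q^{-s} omega_0).\<close>
definition S_X_psi :: "(real \<Rightarrow> real) \<Rightarrow> (real \<Rightarrow> complex) \<Rightarrow> real \<Rightarrow> real \<Rightarrow> real" where
  "S_X_psi S Psi q s = (1 / psi_sq_norm Psi) *
     set_lebesgue_integral lborel {0<..} (\<lambda>\<xi>. S \<xi> * q powr s * (cmod (Psi (q powr s * \<xi>)))\<^sup>2)"

definition cov_W :: "(real \<Rightarrow> real) \<Rightarrow> (real \<Rightarrow> real) \<Rightarrow> (real \<Rightarrow> real) \<Rightarrow> (real \<Rightarrow> real)
   \<Rightarrow> (real \<Rightarrow> complex) \<Rightarrow> real \<Rightarrow> real \<Rightarrow> real \<Rightarrow> real \<Rightarrow> real \<Rightarrow> complex" where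
  "cov_W a \<gamma> \<gamma>' S Psi q s \<tau> s' \<tau>' =
     complex_of_real (a \<tau> * a \<tau>' * q powr ((s + s') / 2) * sqrt (\<gamma>' \<tau> * \<gamma>' \<tau>')) *
     set_lebesgue_integral lborel {0<..} (\<lambda>\<xi>. complex_of_real (S \<xi>)
        * cnj (Psi (q powr s * \<gamma>' \<tau> * \<xi>)) * Psi (q powr s' * \<gamma>' \<tau>' * \<xi>)
        * exp (2 * \<i> * complex_of_real (pi * \<xi> * (\<gamma> \<tau> - \<gamma> \<tau>'))))"

end

theory Submission
  imports Defs
begin

text \<open>The expected scalogram of the deformed process at scale \<open>u\<close> and time \<open>\<tau>\<close> is
  \<open>a(\<tau>)\<^sup>2 F(u + log\<^sub>q \<gamma>'(\<tau>))\<close>, where \<open>F(v) = \<integral> S(\<xi>) q\<^sup>v |\<Psi>(q\<^sup>v \<xi>)|\<^sup>2 d\<xi>\<close> is the expected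
  scalogram of \<open>X\<close> itself. Each summand of the bias is therefore
  \<open>a\<^sup>2/\<theta>\<^sub>1 F(v) - F(s) = (a\<^sup>2 - \<theta>\<^sub>1)/\<theta>\<^sub>1 F(v) + (F(v) - F(s))\<close>. Writing the integrand of \<open>F\<close> as
  \<open>S(\<xi>)/\<xi> \<phi>\<^sub>1(q\<^sup>v \<xi>)\<close> bounds \<open>|F|\<close> by \<open>\<parallel>\<phi>\<^sub>1\<parallel>\<^sub>\<infinity> J\<^sub>X\<close>, which controls the first part;
  differentiating the integrand in \<open>v\<close> shows that \<open>F\<close> is Lipschitz with constant
  \<open>ln q (\<parallel>\<phi>\<^sub>1\<parallel>\<^sub>\<infinity> + 2\<parallel>\<Psi>'\<parallel>\<^sub>\<infinity>\<parallel>\<phi>\<^sub>2\<parallel>\<^sub>\<infinity>) J\<^sub>X\<close>, which controls the second.\<close>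

lemma bigo_powr_imp_inverse_square_bound:
  fixes f :: "real \<Rightarrow> real"
  assumes \<eta>: "\<eta> \<ge> 2" and decay: "f \<in> O[at_top](\<lambda>u. u powr (- \<eta>))"
  obtains c U where "c \<ge> 0" "U \<ge> 1" "\<And>u. u \<ge> U \<Longrightarrow> \<bar>f u\<bar> \<le> c / u\<^sup>2"
proof -
  obtain c where c: "c > 0" and "eventually (\<lambda>u. norm (f u) \<le> c * norm (u powr (- \<eta>))) at_top"
    using landau_o.bigE[OF decay] by blast
  then obtain U0 where U0: "\<And>u. u \<ge> U0 \<Longrightarrow> \<bar>f u\<bar> \<le> c * \<bar>u powr (- \<eta>)\<bar>"
    unfolding eventually_at_top_linorder by auto
  have "\<bar>f u\<bar> \<le> c / u\<^sup>2" if "u \<ge> max U0 1" for u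
  proof -
    have "\<bar>f u\<bar> \<le> c * u powr (- \<eta>)" using U0[of u] that by simp
    also have "\<dots> \<le> c * u powr (- 2)" using that \<eta> c by (intro mult_left_mono powr_mono) auto
    also have "\<dots> = c / u\<^sup>2" using that by (simp add: powr_minus_divide powr_realpow)
    finally show ?thesis .
  qed
  then show thesis using c by (intro that[of c "max U0 1"]) auto
qed

lemma bdd_above_abs_phi1:
  fixes Psi :: "real \<Rightarrow> complex"
  assumes bdd: "bounded (range Psi)" and \<eta>: "\<eta> \<ge> 2"
    and decay: "(\<lambda>u. cmod (Psi u)) \<in> O[at_top](\<lambda>u. u powr (- \<eta>))"
  shows "bdd_above ((\<lambda>u. \<bar>phi1 Psi u\<bar>) ` {0<..})"
proof -
  obtain R where R: "\<And>u. cmod (Psi u) \<le> R" using bdd unfolding bounded_iff by auto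
  obtain c U where c: "c \<ge> 0" and U: "U \<ge> 1" and tail: "\<And>u. u \<ge> U \<Longrightarrow> cmod (Psi u) \<le> c / u\<^sup>2"
    using bigo_powr_imp_inverse_square_bound[OF \<eta> decay] by auto
  have "\<bar>phi1 Psi u\<bar> \<le> max (U * R\<^sup>2) (c * R)" if "u > 0" for u
  proof (cases "u \<ge> U")
    case True
    have "\<bar>phi1 Psi u\<bar> = u * cmod (Psi u) * cmod (Psi u)"
      using that by (simp add: phi1_def power2_eq_square)
    also have "\<dots> \<le> u * (c / u\<^sup>2) * R"
      using that tail[OF True] R[of u] c by (intro mult_mono mult_left_mono) auto
    also have "\<dots> = c * R / u" using that by (simp add: power2_eq_square)
    also have "\<dots> \<le> c * R"
      using True U mult_nonneg_nonneg[OF c order_trans[OF norm_ge_zero R[of u]]]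
      by (simp add: divide_le_eq mult_le_cancel_left1)
    finally show ?thesis by simp
  next
    case False
    have "\<bar>phi1 Psi u\<bar> = u * (cmod (Psi u))\<^sup>2" using that by (simp add: phi1_def)
    also have "\<dots> \<le> U * R\<^sup>2" using False that R[of u] by (intro mult_mono power_mono) auto
    finally show ?thesis by simp
  qed
  then show ?thesis by (auto intro!: bdd_aboveI2)
qed

lemma bdd_above_abs_phi2:
  fixes Psi :: "real \<Rightarrow> complex"
  assumes bdd: "bounded (range Psi)" and \<eta>: "\<eta> \<ge> 2"
    and decay: "(\<lambda>u. cmod (Psi u)) \<in> O[at_top](\<lambda>u. u powr (- \<eta>))"
  shows "bdd_above ((\<lambda>u. \<bar>phi2 Psi u\<bar>) ` {0<..})"
proof -
  obtain R where R: "\<And>u. cmod (Psi u) \<le> R" using bdd unfolding bounded_iff by auto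
  obtain c U where c: "c \<ge> 0" and U: "U \<ge> 1" and tail: "\<And>u. u \<ge> U \<Longrightarrow> cmod (Psi u) \<le> c / u\<^sup>2"
    using bigo_powr_imp_inverse_square_bound[OF \<eta> decay] by auto
  have "\<bar>phi2 Psi u\<bar> \<le> max (U\<^sup>2 * R) c" if "u > 0" for u
  proof (cases "u \<ge> U")
    case True
    have "\<bar>phi2 Psi u\<bar> \<le> c"
      using tail[OF True] that by (simp add: phi2_def pos_le_divide_eq mult.commute)
    then show ?thesis by simp
  next
    case False
    have "\<bar>phi2 Psi u\<bar> \<le> U\<^sup>2 * R"
      using False that R[of u] by (simp add: phi2_def) (intro mult_mono power_mono, auto)
    then show ?thesis by simp
  qed
  then show ?thesis by (auto intro!: bdd_aboveI2)
qed

lemma lipschitz_on_UNIV_if_derivative_bounded: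
  fixes f :: "real \<Rightarrow> real"
  assumes "\<And>x. (f has_real_derivative f' x) (at x)" and "\<And>x. \<bar>f' x\<bar> \<le> B"
  shows "B-lipschitz_on UNIV f"
proof (rule bounded_derivative_imp_lipschitz)
  fix x
  show "(f has_derivative (*) (f' x)) (at x within UNIV)"
    using assms(1) by (simp add: has_field_derivative_def)
  have "(*\<^sub>R) (f' x) = (*) (f' x)" by auto
  then have "onorm ((*) (f' x)) = \<bar>f' x\<bar>"
    using onorm_scaleR[OF bounded_linear_ident, of "f' x"] by (metis onorm_id mult.right_neutral)
  then show "onorm ((*) (f' x)) \<le> B" using assms(2) by simp
qed (use assms(2)[of 0] in auto)

lemma has_real_derivative_power2_norm:
  fixes f :: "real \<Rightarrow> 'a::real_inner"
  assumes "(f has_vector_derivative f') (at x)"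
  shows "((\<lambda>x. (norm (f x))\<^sup>2) has_real_derivative 2 * inner (f x) f') (at x)"
proof -
  have df: "(f has_derivative (\<lambda>h. h *\<^sub>R f')) (at x)"
    using assms by (simp add: has_vector_derivative_def)
  have "((\<lambda>x. inner (f x) (f x)) has_derivative (\<lambda>h. inner (f x) (h *\<^sub>R f') + inner (h *\<^sub>R f') (f x))) (at x)"
    by (rule has_derivative_inner[OF df df])
  also have "(\<lambda>h. inner (f x) (h *\<^sub>R f') + inner (h *\<^sub>R f') (f x)) = (*) (2 * inner (f x) f')"
    by (auto simp: inner_commute algebra_simps)
  finally show ?thesis by (simp add: has_field_derivative_def power2_norm_eq_inner)
qed

lemma has_real_derivative_dilated_energy:
  fixes Psi Psi' :: "real \<Rightarrow> complex"
  assumes q: "q > 0" and \<xi>: "\<xi> > 0"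
    and Psi_deriv: "(Psi has_vector_derivative Psi' (q powr v * \<xi>)) (at (q powr v * \<xi>))"
  defines "w \<equiv> q powr v * \<xi>"
  shows "((\<lambda>v. q powr v * (cmod (Psi (q powr v * \<xi>)))\<^sup>2) has_real_derivative
           ln q / \<xi> * (phi1 Psi w + 2 * w\<^sup>2 * inner (Psi w) (Psi' w))) (at v)"
proof -
  have dw: "((\<lambda>v. q powr v * \<xi>) has_real_derivative w * ln q) (at v)"
    using q by (auto intro!: derivative_eq_intros simp: w_def)
  have "((\<lambda>v. (cmod (Psi (q powr v * \<xi>)))\<^sup>2) has_real_derivative
      2 * inner (Psi w) (Psi' w) * (w * ln q)) (at v)"
    using DERIV_chain2[OF has_real_derivative_power2_norm[OF Psi_deriv] dw] by (simp add: w_def)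
  moreover have "((\<lambda>v. q powr v) has_real_derivative q powr v * ln q) (at v)"
    using q by (auto intro!: derivative_eq_intros)
  ultimately have "((\<lambda>v. q powr v * (cmod (Psi (q powr v * \<xi>)))\<^sup>2) has_real_derivative
      q powr v * ln q * (cmod (Psi w))\<^sup>2 + q powr v * (2 * inner (Psi w) (Psi' w) * (w * ln q))) (at v)"
    by (auto intro: derivative_eq_intros simp: w_def)
  then show ?thesis
    by (rule DERIV_cong) (use q \<xi> in \<open>simp add: w_def phi1_def field_simps power2_eq_square\<close>)
qed

lemma lipschitz_on_dilated_energy:
  fixes Psi Psi' :: "real \<Rightarrow> complex"
  assumes q: "q > 1" and \<xi>: "\<xi> > 0"
    and Psi_deriv: "\<And>u. u > 0 \<Longrightarrow> (Psi has_vector_derivative Psi' u) (at u)"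
    and phi1_le: "\<And>u. u > 0 \<Longrightarrow> \<bar>phi1 Psi u\<bar> \<le> A"
    and Psi'_le: "\<And>u. u > 0 \<Longrightarrow> cmod (Psi' u) \<le> B"
    and phi2_le: "\<And>u. u > 0 \<Longrightarrow> \<bar>phi2 Psi u\<bar> \<le> C"
  shows "(ln q / \<xi> * (A + 2 * B * C))-lipschitz_on UNIV
           (\<lambda>v. q powr v * (cmod (Psi (q powr v * \<xi>)))\<^sup>2)"
proof (rule lipschitz_on_UNIV_if_derivative_bounded)
  fix v
  define w where "w = q powr v * \<xi>"
  have w: "w > 0" using q \<xi> by (simp add: w_def)
  show "((\<lambda>v. q powr v * (cmod (Psi (q powr v * \<xi>)))\<^sup>2) has_real_derivative
      ln q / \<xi> * (phi1 Psi w + 2 * w\<^sup>2 * inner (Psi w) (Psi' w))) (at v)"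
    unfolding w_def using q \<xi> Psi_deriv by (intro has_real_derivative_dilated_energy) auto
  have "\<bar>w\<^sup>2 * inner (Psi w) (Psi' w)\<bar> \<le> phi2 Psi w * cmod (Psi' w)"
    using Cauchy_Schwarz_ineq2[of "Psi w" "Psi' w"]
    by (simp add: phi2_def abs_mult mult.assoc mult_left_mono)
  also have "\<dots> \<le> C * B"
    using phi2_le[OF w] Psi'_le[OF w] order_trans[OF abs_ge_zero phi2_le[OF w]]
    by (intro mult_mono) (auto simp: phi2_def)
  also have "\<dots> = B * C" by simp
  finally have "\<bar>phi1 Psi w + 2 * w\<^sup>2 * inner (Psi w) (Psi' w)\<bar> \<le> A + 2 * B * C"
    using phi1_le[OF w] by (auto simp: abs_le_iff mult.assoc)
  then show "\<bar>ln q / \<xi> * (phi1 Psi w + 2 * w\<^sup>2 * inner (Psi w) (Psi' w))\<bar> \<le> ln q / \<xi> * (A + 2 * B * C)"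
    using q \<xi> by (simp add: abs_mult divide_right_mono mult_left_mono)
qed

definition expected_scalogram :: "(real \<Rightarrow> real) \<Rightarrow> (real \<Rightarrow> complex) \<Rightarrow> real \<Rightarrow> real \<Rightarrow> real" where
  "expected_scalogram S Psi q v =
     set_lebesgue_integral lborel {0<..} (\<lambda>\<xi>. S \<xi> * q powr v * (cmod (Psi (q powr v * \<xi>)))\<^sup>2)"

lemma S_X_psi_eq_expected_scalogram:
  "S_X_psi S Psi q s = expected_scalogram S Psi q s / psi_sq_norm Psi"
  by (simp add: S_X_psi_def expected_scalogram_def)

context
  fixes S :: "real \<Rightarrow> real" and Psi :: "real \<Rightarrow> complex" and q A :: real
  assumes q: "q > 0"
    and S_nonneg: "\<And>\<nu>. S \<nu> \<ge> 0"
    and S_meas: "S \<in> borel_measurable borel"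
    and Psi_meas: "Psi \<in> borel_measurable borel"
    and J_fin: "set_integrable lborel {0<..} (\<lambda>\<xi>. S \<xi> / \<xi>)"
    and phi1_le: "\<And>u. u > 0 \<Longrightarrow> \<bar>phi1 Psi u\<bar> \<le> A"
begin

lemma abs_dilated_spectrum_le:
  assumes "\<xi> > 0"
  shows "\<bar>S \<xi> * q powr v * (cmod (Psi (q powr v * \<xi>)))\<^sup>2\<bar> \<le> A * (S \<xi> / \<xi>)"
proof -
  have "S \<xi> * q powr v * (cmod (Psi (q powr v * \<xi>)))\<^sup>2 = S \<xi> / \<xi> * phi1 Psi (q powr v * \<xi>)"
    using assms by (simp add: phi1_def)
  also have "\<bar>\<dots>\<bar> \<le> S \<xi> / \<xi> * A"
    using assms q S_nonneg[of \<xi>] phi1_le[of "q powr v * \<xi>"]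
    by (simp add: abs_mult mult_left_mono divide_right_mono)
  finally show ?thesis by (simp add: mult.commute)
qed

lemma set_integrable_dilated_spectrum:
  "set_integrable lborel {0<..} (\<lambda>\<xi>. S \<xi> * q powr v * (cmod (Psi (q powr v * \<xi>)))\<^sup>2)"
proof (rule set_integrable_bound[OF set_integrable_mult_right[OF J_fin, of A]])
  show "set_borel_measurable lborel {0<..} (\<lambda>\<xi>. S \<xi> * q powr v * (cmod (Psi (q powr v * \<xi>)))\<^sup>2)"
    unfolding set_borel_measurable_def using S_meas Psi_meas by measurable
  show "AE \<xi> in lborel. \<xi> \<in> {0<..} \<longrightarrow>
      norm (S \<xi> * q powr v * (cmod (Psi (q powr v * \<xi>)))\<^sup>2) \<le> norm (A * (S \<xi> / \<xi>))"
    by (intro AE_I2 impI) (metis abs_dilated_spectrum_le abs_ge_self order_trans real_norm_def greaterThan_iff)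
qed

lemma abs_expected_scalogram_le:
  "\<bar>expected_scalogram S Psi q v\<bar> \<le> A * set_lebesgue_integral lborel {0<..} (\<lambda>\<xi>. S \<xi> / \<xi>)"
proof -
  have "\<bar>expected_scalogram S Psi q v\<bar>
      \<le> set_lebesgue_integral lborel {0<..} (\<lambda>\<xi>. \<bar>S \<xi> * q powr v * (cmod (Psi (q powr v * \<xi>)))\<^sup>2\<bar>)"
    unfolding expected_scalogram_def using set_integral_norm_bound[OF set_integrable_dilated_spectrum]
    by simp
  also have "\<dots> \<le> set_lebesgue_integral lborel {0<..} (\<lambda>\<xi>. A * (S \<xi> / \<xi>))"
    by (rule set_integral_mono[OF set_integrable_abs[OF set_integrable_dilated_spectrum]
          set_integrable_mult_right[OF J_fin]])
      (use abs_dilated_spectrum_le in auto)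
  also have "\<dots> = A * set_lebesgue_integral lborel {0<..} (\<lambda>\<xi>. S \<xi> / \<xi>)"
    by (rule set_integral_mult_right)
  finally show ?thesis .
qed

lemma lipschitz_on_expected_scalogram:
  fixes Psi' :: "real \<Rightarrow> complex"
  assumes q1: "q > 1"
    and Psi_deriv: "\<And>u. u > 0 \<Longrightarrow> (Psi has_vector_derivative Psi' u) (at u)"
    and Psi'_le: "\<And>u. u > 0 \<Longrightarrow> cmod (Psi' u) \<le> B"
    and phi2_le: "\<And>u. u > 0 \<Longrightarrow> \<bar>phi2 Psi u\<bar> \<le> C"
  shows "(ln q * (A + 2 * B * C) * set_lebesgue_integral lborel {0<..} (\<lambda>\<xi>. S \<xi> / \<xi>))-lipschitz_on
           UNIV (expected_scalogram S Psi q)"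
proof (rule lipschitz_onI)
  define K where "K = ln q * (A + 2 * B * C)"
  have "0 \<le> A" "0 \<le> B" "0 \<le> C"
    using phi1_le[of 1] Psi'_le[of 1] phi2_le[of 1] norm_ge_zero[of "Psi' 1"] by linarith+
  then have "K \<ge> 0" using q1 by (simp add: K_def)
  moreover have "set_lebesgue_integral lborel {0<..} (\<lambda>\<xi>. S \<xi> / \<xi>) \<ge> 0"
    unfolding set_lebesgue_integral_def using S_nonneg
    by (intro integral_nonneg_AE AE_I2) (auto simp: indicator_def)
  ultimately show "0 \<le> K * set_lebesgue_integral lborel {0<..} (\<lambda>\<xi>. S \<xi> / \<xi>)" by simp
  fix x y :: real
  let ?g = "\<lambda>v \<xi>. S \<xi> * q powr v * (cmod (Psi (q powr v * \<xi>)))\<^sup>2"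
  have pointwise: "\<bar>?g x \<xi> - ?g y \<xi>\<bar> \<le> K * \<bar>x - y\<bar> * (S \<xi> / \<xi>)" if "\<xi> > 0" for \<xi>
  proof -
    have "\<bar>?g x \<xi> - ?g y \<xi>\<bar> =
        S \<xi> * \<bar>q powr x * (cmod (Psi (q powr x * \<xi>)))\<^sup>2 - q powr y * (cmod (Psi (q powr y * \<xi>)))\<^sup>2\<bar>"
      using S_nonneg[of \<xi>] by (simp add: abs_mult mult.assoc flip: right_diff_distrib)
    also have "\<dots> \<le> S \<xi> * (ln q / \<xi> * (A + 2 * B * C) * \<bar>x - y\<bar>)"
      using lipschitz_onD[OF lipschitz_on_dilated_energy[OF q1 that Psi_deriv phi1_le Psi'_le phi2_le]]
        S_nonneg[of \<xi>]
      by (intro mult_left_mono) (auto simp: dist_real_def)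
    finally show ?thesis by (simp add: K_def mult_ac)
  qed
  have "\<bar>expected_scalogram S Psi q x - expected_scalogram S Psi q y\<bar>
      = \<bar>set_lebesgue_integral lborel {0<..} (\<lambda>\<xi>. ?g x \<xi> - ?g y \<xi>)\<bar>"
    unfolding expected_scalogram_def
    by (simp add: set_integral_diff[OF set_integrable_dilated_spectrum set_integrable_dilated_spectrum])
  also have "\<dots> \<le> set_lebesgue_integral lborel {0<..} (\<lambda>\<xi>. K * \<bar>x - y\<bar> * (S \<xi> / \<xi>))"
  proof -
    have diff: "set_integrable lborel {0<..} (\<lambda>\<xi>. ?g x \<xi> - ?g y \<xi>)"
      by (rule set_integral_diff(1)[OF set_integrable_dilated_spectrum set_integrable_dilated_spectrum])
    show ?thesis
      using set_integral_norm_bound[OF diff]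
        set_integral_mono[OF set_integrable_abs[OF diff] set_integrable_mult_right[OF J_fin]] pointwise
      by fastforce
  qed
  also have "\<dots> = K * \<bar>x - y\<bar> * set_lebesgue_integral lborel {0<..} (\<lambda>\<xi>. S \<xi> / \<xi>)"
    by (rule set_integral_mult_right)
  finally show "dist (expected_scalogram S Psi q x) (expected_scalogram S Psi q y)
      \<le> K * set_lebesgue_integral lborel {0<..} (\<lambda>\<xi>. S \<xi> / \<xi>) * dist x y"
    by (simp add: dist_real_def mult_ac)
qed

end

lemma cov_W_diagonal:
  assumes q: "q > 0" "q \<noteq> 1" and \<gamma>': "\<gamma>' t > 0"
  shows "cov_W a \<gamma> \<gamma>' S Psi q u t u t =
    complex_of_real ((a t)\<^sup>2 * expected_scalogram S Psi q (u + log q (\<gamma>' t)))"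
proof -
  define v where "v = u + log q (\<gamma>' t)"
  have qv: "q powr u * \<gamma>' t = q powr v"
    using q \<gamma>' by (simp add: v_def powr_add)
  have integrand: "indicator {0<..} \<xi> *\<^sub>R (complex_of_real (S \<xi>)
        * cnj (Psi (q powr v * \<xi>)) * Psi (q powr v * \<xi>)
        * exp (2 * \<i> * complex_of_real (pi * \<xi> * (\<gamma> t - \<gamma> t))))
      = complex_of_real (indicator {0<..} \<xi> * (S \<xi> * (cmod (Psi (q powr v * \<xi>)))\<^sup>2))" for \<xi>
    using complex_norm_square[of "Psi (q powr v * \<xi>)"]
    by (simp add: mult.commute[of "cnj _"] scaleR_conv_of_real)
  have "cov_W a \<gamma> \<gamma>' S Psi q u t u t = complex_of_real (a t * a t * q powr ((u + u) / 2) *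
      sqrt (\<gamma>' t * \<gamma>' t) * (\<integral>\<xi>. indicator {0<..} \<xi> * (S \<xi> * (cmod (Psi (q powr v * \<xi>)))\<^sup>2) \<partial>lborel))"
    unfolding cov_W_def set_lebesgue_integral_def qv integrand integral_complex_of_real by simp
  also have "\<dots> = complex_of_real ((a t)\<^sup>2 * q powr v *
      set_lebesgue_integral lborel {0<..} (\<lambda>\<xi>. S \<xi> * (cmod (Psi (q powr v * \<xi>)))\<^sup>2))"
    using \<gamma>' by (simp add: set_lebesgue_integral_def power2_eq_square flip: qv)
  also have "\<dots> = complex_of_real ((a t)\<^sup>2 * expected_scalogram S Psi q v)"
  proof -
    have "(\<lambda>\<xi>. S \<xi> * q powr v * (cmod (Psi (q powr v * \<xi>)))\<^sup>2)
        = (\<lambda>\<xi>. q powr v * (S \<xi> * (cmod (Psi (q powr v * \<xi>)))\<^sup>2))"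
      by (auto simp: mult_ac)
    then show ?thesis
      unfolding expected_scalogram_def by (simp only: set_integral_mult_right mult.assoc)
  qed
  finally show ?thesis by (simp add: v_def)
qed

lemma integral_cmod_square_field:
  fixes W :: "real \<Rightarrow> real \<Rightarrow> 'a \<Rightarrow> complex"
  assumes q: "q > 0" "q \<noteq> 1" and \<gamma>': "\<gamma>' t > 0"
    and W_cov: "\<And>s1 t1 s2 t2. (\<integral>\<omega>. W s1 t1 \<omega> * cnj (W s2 t2 \<omega>) \<partial>M)
                   = cov_W a \<gamma> \<gamma>' S Psi q s1 t1 s2 t2"
  shows "(\<integral>\<omega>. (cmod (W u t \<omega>))\<^sup>2 \<partial>M) = (a t)\<^sup>2 * expected_scalogram S Psi q (u + log q (\<gamma>' t))"
proof -
  have "complex_of_real (\<integral>\<omega>. (cmod (W u t \<omega>))\<^sup>2 \<partial>M) = (\<integral>\<omega>. W u t \<omega> * cnj (W u t \<omega>) \<partial>M)"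
    by (simp only: complex_norm_square flip: integral_complex_of_real)
  also have "\<dots> = complex_of_real ((a t)\<^sup>2 * expected_scalogram S Psi q (u + log q (\<gamma>' t)))"
    unfolding W_cov using q \<gamma>' by (rule cov_W_diagonal)
  finally show ?thesis by (simp only: of_real_eq_iff)
qed

lemma integral_scalogram_estimator:
  fixes W :: "real \<Rightarrow> real \<Rightarrow> 'a \<Rightarrow> complex" and \<theta>1 \<theta>2 \<tau> :: "nat \<Rightarrow> real"
  assumes q: "q > 0" "q \<noteq> 1" and \<gamma>': "\<And>n. n \<in> {1..N} \<Longrightarrow> \<gamma>' (\<tau> n) > 0"
    and W_cov_int: "\<And>s1 t1 s2 t2. integrable M (\<lambda>\<omega>. W s1 t1 \<omega> * cnj (W s2 t2 \<omega>))"
    and W_cov: "\<And>s1 t1 s2 t2. (\<integral>\<omega>. W s1 t1 \<omega> * cnj (W s2 t2 \<omega>) \<partial>M)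
                   = cov_W a \<gamma> \<gamma>' S Psi q s1 t1 s2 t2"
  shows "(\<integral>\<omega>. c * (\<Sum>n=1..N. 1 / \<theta>1 n * (cmod (W (s0 - \<theta>2 n) (\<tau> n) \<omega>))\<^sup>2) \<partial>M)
    = c * (\<Sum>n=1..N. (a (\<tau> n))\<^sup>2 / \<theta>1 n * expected_scalogram S Psi q (s0 - \<theta>2 n + log q (\<gamma>' (\<tau> n))))"
proof -
  have integrable: "integrable M (\<lambda>\<omega>. (cmod (W u t \<omega>))\<^sup>2)" for u t
    using integrable_Re[OF W_cov_int[of u t u t]] by (simp flip: complex_norm_square)
  have second_moment: "(\<integral>\<omega>. (cmod (W (s0 - \<theta>2 n) (\<tau> n) \<omega>))\<^sup>2 \<partial>M)
      = (a (\<tau> n))\<^sup>2 * expected_scalogram S Psi q (s0 - \<theta>2 n + log q (\<gamma>' (\<tau> n)))"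
    if "n \<in> {1..N}" for n
    using q \<gamma>'[OF that] W_cov by (rule integral_cmod_square_field)
  show ?thesis
    by (simp add: integral_sum integrable) (rule disjI2, rule sum.cong, simp_all add: second_moment)
qed

lemma abs_ratio_mult_diff_le:
  fixes \<alpha> \<theta> c R y z :: real
  assumes c: "0 < c" "c < \<theta>" and y: "\<bar>y\<bar> \<le> R"
  shows "\<bar>\<alpha> / \<theta> * y - z\<bar> \<le> \<bar>\<alpha> - \<theta>\<bar> / c * R + \<bar>y - z\<bar>"
proof -
  have split: "\<alpha> / \<theta> * y - z = (\<alpha> - \<theta>) / \<theta> * y + (y - z)"
    using c by (simp add: field_simps)
  have "\<bar>(\<alpha> - \<theta>) / \<theta> * y\<bar> \<le> \<bar>\<alpha> - \<theta>\<bar> / c * R"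
    using c y by (simp add: abs_mult abs_divide frac_le mult_mono)
  then show ?thesis
    unfolding split using abs_triangle_ineq[of "(\<alpha> - \<theta>) / \<theta> * y" "y - z"] by linarith
qed

lemma abs_normalized_mean_diff_le:
  fixes F :: "real \<Rightarrow> real" and \<alpha> \<theta> v :: "nat \<Rightarrow> real"
  assumes N: "N \<ge> 1" and P: "P \<ge> 0" and c: "c > 0" and \<theta>: "\<And>n. n \<in> {1..N} \<Longrightarrow> c < \<theta> n"
    and F_le: "\<And>x. \<bar>F x\<bar> \<le> R" and F_lip: "L-lipschitz_on UNIV F"
  shows "\<bar>1 / (real N * P) * (\<Sum>n=1..N. \<alpha> n / \<theta> n * F (v n)) - F x / P\<bar>
     \<le> (R / c * (MAX n\<in>{1..N}. \<bar>\<alpha> n - \<theta> n\<bar>) + L * (MAX n\<in>{1..N}. \<bar>x - v n\<bar>)) / P"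
    (is "_ \<le> ?bound / P")
  \<comment> \<open>\<open>P = 0\<close> is allowed: both sides then vanish, since \<open>x / 0 = 0\<close>.\<close>
proof -
  have term_le: "\<bar>\<alpha> n / \<theta> n * F (v n) - F x\<bar> \<le> ?bound" if n: "n \<in> {1..N}" for n
  proof -
    have "\<bar>\<alpha> n / \<theta> n * F (v n) - F x\<bar> \<le> \<bar>\<alpha> n - \<theta> n\<bar> / c * R + \<bar>F (v n) - F x\<bar>"
      using c \<theta>[OF n] F_le by (rule abs_ratio_mult_diff_le)
    also have "\<dots> \<le> R / c * (MAX n\<in>{1..N}. \<bar>\<alpha> n - \<theta> n\<bar>) + L * (MAX n\<in>{1..N}. \<bar>x - v n\<bar>)"
    proof (rule add_mono)
      show "\<bar>\<alpha> n - \<theta> n\<bar> / c * R \<le> R / c * (MAX n\<in>{1..N}. \<bar>\<alpha> n - \<theta> n\<bar>)"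
        using n c order_trans[OF abs_ge_zero F_le]
        by (simp add: mult.commute[of R] divide_right_mono mult_right_mono)
      have "\<bar>F (v n) - F x\<bar> \<le> L * \<bar>x - v n\<bar>"
        using lipschitz_onD[OF F_lip, of "v n" x] by (simp add: dist_real_def abs_minus_commute)
      also have "\<dots> \<le> L * (MAX n\<in>{1..N}. \<bar>x - v n\<bar>)"
        using n lipschitz_on_nonneg[OF F_lip] by (intro mult_left_mono) auto
      finally show "\<bar>F (v n) - F x\<bar> \<le> L * (MAX n\<in>{1..N}. \<bar>x - v n\<bar>)" .
    qed
    finally show ?thesis .
  qed
  have "\<bar>1 / real N * (\<Sum>n=1..N. \<alpha> n / \<theta> n * F (v n)) - F x\<bar>
      = \<bar>\<Sum>n=1..N. \<alpha> n / \<theta> n * F (v n) - F x\<bar> / real N"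
    using N by (simp add: sum_subtractf abs_divide field_simps)
  also have "\<dots> \<le> (\<Sum>n=1..N. ?bound) / real N"
    using term_le by (intro divide_right_mono order_trans[OF sum_abs sum_mono]) auto
  also have "\<dots> = ?bound" using N by simp
  finally have "\<bar>1 / real N * (\<Sum>n=1..N. \<alpha> n / \<theta> n * F (v n)) - F x\<bar> \<le> ?bound" .
  moreover have "1 / (real N * P) * (\<Sum>n=1..N. \<alpha> n / \<theta> n * F (v n)) - F x / P
      = (1 / real N * (\<Sum>n=1..N. \<alpha> n / \<theta> n * F (v n)) - F x) / P"
    by (simp add: diff_divide_distrib)
  ultimately show ?thesis
    using P by (simp add: abs_divide divide_right_mono)
qed

lemma abs_le_sup_pos:
  assumes "bdd_above ((\<lambda>u. \<bar>f u\<bar>) ` {0<..})" and "u > 0"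
  shows "\<bar>f u\<bar> \<le> sup_pos f"
  unfolding sup_pos_def using assms by (intro cSUP_upper) auto

lemma abs_scalogram_estimator_bias_le:
  fixes W :: "real \<Rightarrow> real \<Rightarrow> 'a \<Rightarrow> complex" and Psi Psi' :: "real \<Rightarrow> complex"
    and \<theta>1 \<theta>2 \<tau> :: "nat \<Rightarrow> real"
  assumes q: "q > 1"
    and S_nonneg: "\<And>\<nu>. S \<nu> \<ge> 0"
    and S_meas: "S \<in> borel_measurable borel"
    and Psi_meas: "Psi \<in> borel_measurable borel"
    and J_fin: "set_integrable lborel {0<..} (\<lambda>\<xi>. S \<xi> / \<xi>)"
    and Psi_deriv: "\<And>u. u > 0 \<Longrightarrow> (Psi has_vector_derivative Psi' u) (at u)"
    and phi1_le: "\<And>u. u > 0 \<Longrightarrow> \<bar>phi1 Psi u\<bar> \<le> A"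
    and Psi'_le: "\<And>u. u > 0 \<Longrightarrow> cmod (Psi' u) \<le> B"
    and phi2_le: "\<And>u. u > 0 \<Longrightarrow> \<bar>phi2 Psi u\<bar> \<le> C"
    and \<gamma>': "\<And>n. n \<in> {1..N} \<Longrightarrow> \<gamma>' (\<tau> n) > 0"
    and W_cov_int: "\<And>s1 t1 s2 t2. integrable M (\<lambda>\<omega>. W s1 t1 \<omega> * cnj (W s2 t2 \<omega>))"
    and W_cov: "\<And>s1 t1 s2 t2. (\<integral>\<omega>. W s1 t1 \<omega> * cnj (W s2 t2 \<omega>) \<partial>M)
                   = cov_W a \<gamma> \<gamma>' S Psi q s1 t1 s2 t2"
    and N: "N \<ge> 1" and c: "c > 0" and \<theta>1: "\<And>n. n \<in> {1..N} \<Longrightarrow> c < \<theta>1 n"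
  shows "\<bar>(\<integral>\<omega>. (1 / (real N * psi_sq_norm Psi)) *
              (\<Sum>n=1..N. (1 / \<theta>1 n) * (cmod (W (s0 - \<theta>2 n) (\<tau> n) \<omega>))\<^sup>2) \<partial>M)
         - S_X_psi S Psi q s0\<bar>
    \<le> set_lebesgue_integral lborel {0<..} (\<lambda>\<xi>. S \<xi> / \<xi>) / psi_sq_norm Psi *
       (A / c * (MAX n\<in>{1..N}. \<bar>(a (\<tau> n))\<^sup>2 - \<theta>1 n\<bar>)
        + ln q * (A + 2 * B * C) * (MAX n\<in>{1..N}. \<bar>\<theta>2 n - log q (\<gamma>' (\<tau> n))\<bar>))"
proof -
  have q0: "q > 0" and q_ne_1: "q \<noteq> 1" using q by auto
  note scalogram_assms = q0 S_nonneg S_meas Psi_meas J_fin phi1_le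
  have P: "psi_sq_norm Psi \<ge> 0" unfolding psi_sq_norm_def by simp
  have expectation: "(\<integral>\<omega>. (1 / (real N * psi_sq_norm Psi)) *
              (\<Sum>n=1..N. (1 / \<theta>1 n) * (cmod (W (s0 - \<theta>2 n) (\<tau> n) \<omega>))\<^sup>2) \<partial>M)
      = 1 / (real N * psi_sq_norm Psi) * (\<Sum>n=1..N. (a (\<tau> n))\<^sup>2 / \<theta>1 n *
          expected_scalogram S Psi q (s0 - \<theta>2 n + log q (\<gamma>' (\<tau> n))))"
    by (rule integral_scalogram_estimator[OF q0 q_ne_1 \<gamma>' W_cov_int W_cov])
  show ?thesis
    using abs_normalized_mean_diff_le[OF N P c \<theta>1 abs_expected_scalogram_le[OF scalogram_assms]
        lipschitz_on_expected_scalogram[OF scalogram_assms q Psi_deriv Psi'_le phi2_le],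
        where \<alpha> = "\<lambda>n. (a (\<tau> n))\<^sup>2" and v = "\<lambda>n. s0 - \<theta>2 n + log q (\<gamma>' (\<tau> n))" and x = s0]
    unfolding expectation S_X_psi_eq_expected_scalogram
    by (simp add: field_simps)
qed

theorem proposition1:
  fixes q :: real and \<eta> :: real and c\<^sub>\<theta> :: real
    and S :: "real \<Rightarrow> real"
    and M' :: "'b measure" and X :: "real \<Rightarrow> 'b \<Rightarrow> real"
    and a \<gamma> \<gamma>' :: "real \<Rightarrow> real"
    and Psi Psi' :: "real \<Rightarrow> complex"
    and M :: "'a measure" and W :: "real \<Rightarrow> real \<Rightarrow> 'a \<Rightarrow> complex"
    and N Ms :: nat and \<tau> s :: "nat \<Rightarrow> real"
    and th1 th2 :: "nat \<Rightarrow> nat \<Rightarrow> real" and k :: nat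
  assumes q: "q > 1"
    \<comment> \<open>X: real zero-mean stationary process with power spectrum S\<close>
    and S_nonneg: "\<And>\<nu>. S \<nu> \<ge> 0"
    and S_meas: "S \<in> borel_measurable borel"
    and S_int: "integrable lborel S"
    and M'_prob: "prob_space M'"
    and X_meas: "\<And>t. X t \<in> borel_measurable M'"
    and X_int: "\<And>t t'. integrable M' (\<lambda>\<omega>. X t \<omega> * X t' \<omega>)"
    and X_mean: "\<And>t. integrable M' (X t) \<and> (\<integral>\<omega>. X t \<omega> \<partial>M') = 0"
    and X_cov: "\<And>t t'. complex_of_real (\<integral>\<omega>. X t \<omega> * X t' \<omega> \<partial>M') =
        (\<integral>\<nu>. complex_of_real (S \<nu>) * exp (2 * \<i> * complex_of_real (pi * \<nu> * (t - t'))) \<partial>lborel)"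
    \<comment> \<open>a positive, gamma strictly increasing and differentiable with derivative gamma'\<close>
    and a_pos: "\<And>t. a t > 0"
    and \<gamma>_mono: "strict_mono \<gamma>"
    and \<gamma>_deriv: "\<And>t. (\<gamma> has_real_derivative \<gamma>' t) (at t)"
    and \<gamma>'_pos: "\<And>n. n \<in> {1..N} \<Longrightarrow> \<gamma>' (\<tau> n) > 0"
    \<comment> \<open>psi in H^2, given through its Fourier transform Psi\<close>
    and Psi_meas: "Psi \<in> borel_measurable borel"
    and Psi_L2: "integrable lborel (\<lambda>u. (cmod (Psi u))\<^sup>2)"
    and Psi_supp: "\<And>u. u < 0 \<Longrightarrow> Psi u = 0"
    and Psi_bdd: "bounded (range Psi)"
    and \<eta>: "\<eta> > 2"
    and Psi_decay: "(\<lambda>u. cmod (Psi u)) \<in> O[at_top](\<lambda>u. u powr (- \<eta>))"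
    and Psi_deriv: "\<And>u. u > 0 \<Longrightarrow> (Psi has_vector_derivative Psi' u) (at u)"
    and Psi'_bdd: "bdd_above ((\<lambda>u. cmod (Psi' u)) ` {0<..})"
    \<comment> \<open>J_X finite\<close>
    and J_fin: "set_integrable lborel {0<..} (\<lambda>\<xi>. S \<xi> / \<xi>)"
    \<comment> \<open>the random field tilde W_Y\<close>
    and M_prob: "prob_space M"
    and W_meas: "\<And>s' t. W s' t \<in> borel_measurable M"
    and W_mean: "\<And>s' t. integrable M (W s' t) \<and> (\<integral>\<omega>. W s' t \<omega> \<partial>M) = 0"
    and W_cov_int: "\<And>s1 t1 s2 t2. integrable M (\<lambda>\<omega>. W s1 t1 \<omega> * cnj (W s2 t2 \<omega>))"
    and W_cov: "\<And>s1 t1 s2 t2. (\<integral>\<omega>. W s1 t1 \<omega> * cnj (W s2 t2 \<omega>) \<partial>M)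
                   = cov_W a \<gamma> \<gamma>' S Psi q s1 t1 s2 t2"
    \<comment> \<open>samples and estimates\<close>
    and N: "N \<ge> 1" and Ms: "Ms \<ge> 1"
    and c\<^sub>\<theta>: "c\<^sub>\<theta> > 0"
    and th1_lb: "\<And>k' n. n \<in> {1..N} \<Longrightarrow> th1 k' n > c\<^sub>\<theta>"
  shows
    "bdd_above ((\<lambda>u. \<bar>phi1 Psi u\<bar>) ` {0<..}) \<and> bdd_above ((\<lambda>u. \<bar>phi2 Psi u\<bar>) ` {0<..}) \<and>
     (MAX m\<in>{1..Ms}.
        \<bar>(\<integral>\<omega>. (1 / (real N * psi_sq_norm Psi)) *
              (\<Sum>n=1..N. (1 / th1 k n) * (cmod (W (s m - th2 k n) (\<tau> n) \<omega>))\<^sup>2) \<partial>M)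
         - S_X_psi S Psi q (s m)\<bar>)
     \<le> (set_lebesgue_integral lborel {0<..} (\<lambda>\<xi>. S \<xi> / \<xi>)) / psi_sq_norm Psi *
        ((sup_pos (phi1 Psi) / c\<^sub>\<theta>) * (MAX n\<in>{1..N}. \<bar>(a (\<tau> n))\<^sup>2 - th1 k n\<bar>)
         + ln q * (sup_pos (phi1 Psi) + 2 * (SUP u\<in>{0<..}. cmod (Psi' u)) * sup_pos (phi2 Psi))
           * (MAX n\<in>{1..N}. \<bar>th2 k n - log q (\<gamma>' (\<tau> n))\<bar>))"
proof -
  have bdd1: "bdd_above ((\<lambda>u. \<bar>phi1 Psi u\<bar>) ` {0<..})"
    using \<eta> by (intro bdd_above_abs_phi1[OF Psi_bdd _ Psi_decay]) simp
  have bdd2: "bdd_above ((\<lambda>u. \<bar>phi2 Psi u\<bar>) ` {0<..})"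
    using \<eta> by (intro bdd_above_abs_phi2[OF Psi_bdd _ Psi_decay]) simp
  have Psi'_le: "\<And>u. u > 0 \<Longrightarrow> cmod (Psi' u) \<le> (SUP u\<in>{0<..}. cmod (Psi' u))"
    using Psi'_bdd by (intro cSUP_upper) auto
  note bias_le = abs_scalogram_estimator_bias_le[where ?\<theta>1.0 = "th1 k", OF q S_nonneg S_meas Psi_meas J_fin
      Psi_deriv abs_le_sup_pos[OF bdd1] Psi'_le abs_le_sup_pos[OF bdd2] \<gamma>'_pos W_cov_int W_cov N c\<^sub>\<theta> th1_lb]
  show ?thesis
    using bdd1 bdd2 Ms bias_le by (auto intro!: Max.boundedI)
qed

end
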